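(* Let $\mathbf{s}$ be any composition (finite tuple of positive integers) of weight $w$ and let $p$ be an odd prime. Then $$-S(\mathbf{s}^\ast;p-1)\equiv S(\mathbf{s};p-1)+p\sum_{\mathbf{t}\preceq\mathbf{s}}H(\mathbf{t}\sqcup(1);p-1)\pmod{p^2}.$$
   Context: For $\mathbf{s}=(s_1,\dots,s_l)$ and $N\ge0$: $H(\mathbf{s};N)=\sum_{1\le k_1<\dots<k_l\le N}k_1^{-s_1}\cdots k_l^{-s_l}$, $S(\mathbf{s};N)=\sum_{1\le k_1\le\dots\le k_l\le N}k_1^{-s_1}\cdots k_l^{-s_l}$. The weight of $\mathbf{s}$ is $s_1+\dots+s_l$. For $\mathbf{s}=(i_1,\dots,i_k)$ of weight $w$, let $P(\mathbf{s})=\{i_1,i_1+i_2,\dots,i_1+\dots+i_{k-1}\}\subseteq\{1,\dots,w-1\}$; $P$ is a bijection from compositions of $w$ to subsets of $\{1,\dots,w-1\}$, and $\mathbf{s}^\ast$ is the composition of $w$ with $P(\mathbf{s}^\ast)=\{1,\dots,w-1\}\setminus P(\mathbf{s})$. $\mathbf{t}\preceq\mathbf{s}$ means $\mathbf{t}$ is obtained from $\mathbf{s}$ by combining (adding) some groups of consecutive parts (including $\mathbf{t}=\mathbf{s}$). $\mathbf{t}\sqcup(1)$ is the tuple $\mathbf{t}$ with an entry $1$ appended at the end. Congruences of rationals with denominators prime to $p$ are in the usual $p$-integral sense. *)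

theory Defs
  imports Complex_Main "HOL-Computational_Algebra.Primes"
begin

definition composition :: "nat list \<Rightarrow> bool" where
  "composition s \<longleftrightarrow> (\<forall>x\<in>set s. 0 < x)"

definition weight :: "nat list \<Rightarrow> nat" where
  "weight s = sum_list s"

definition Hsum :: "nat list \<Rightarrow> nat \<Rightarrow> rat" where
  "Hsum s N = (\<Sum>ks\<in>{ks. length ks = length s \<and> sorted_wrt (<) ks \<and> set ks \<subseteq> {1..N}}.
       \<Prod>i<length s. 1 / (of_nat (ks ! i)) ^ (s ! i))"

definition Ssum :: "nat list \<Rightarrow> nat \<Rightarrow> rat" where
  "Ssum s N = (\<Sum>ks\<in>{ks. length ks = length s \<and> sorted_wrt (\<le>) ks \<and> set ks \<subseteq> {1..N}}.
       \<Prod>i<length s. 1 / (of_nat (ks ! i)) ^ (s ! i))"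

definition Pset :: "nat list \<Rightarrow> nat set" where
  "Pset s = {sum_list (take j s) | j. 1 \<le> j \<and> j < length s}"

definition dual :: "nat list \<Rightarrow> nat list" where
  "dual s = (THE c. composition c \<and> weight c = weight s \<and>
                    Pset c = {1..weight s - 1} - Pset s)"

definition coarsening :: "nat list \<Rightarrow> nat list \<Rightarrow> bool" where
  "coarsening t s \<longleftrightarrow> (\<exists>gs. (\<forall>g\<in>set gs. g \<noteq> []) \<and> concat gs = s \<and> t = map sum_list gs)"

definition rat_cong :: "rat \<Rightarrow> rat \<Rightarrow> int \<Rightarrow> bool" where
  "rat_cong x y m \<longleftrightarrow> (\<exists>a b::int. b \<noteq> 0 \<and> coprime b m \<and> x - y = of_int m * of_int a / of_int b)"

end

theory Submission
  imports Defs
begin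

text \<open>
  Write f(k) = S(s_1,...,s_(l-1); k) / k^(s_l) for the terms of S(s; N) = sum_(k=1..N) f(k).
  By Hoffman's duality S(s*; n) is the binomial transform sum_(k=1..n) (-1)^(k-1) C(n,k) f(k).
  For n = p - 1 the coefficients satisfy (-1)^k C(p-1,k) = prod_(j=1..k) (1 - p/j), which is
  1 - p H_k modulo p^2, so -S(s*; p-1) = S(s; p-1) - p sum_k H_k f(k) modulo p^2.
  Summation by parts gives sum_k H_k f(k) = H_(p-1) S(s; p-1) - sum_k S(s; k-1)/k, where
  H_(p-1) is divisible by p (pair j with p - j), and the last sum is the sum of H(t,1; p-1)
  over the coarsenings t of s, because S(s; N) is the sum of H(t; N) over them.
\<close>

section \<open>Binomial transforms\<close>

definition binomial_transform :: "(nat \<Rightarrow> 'a::comm_ring_1) \<Rightarrow> nat \<Rightarrow> 'a" where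
  "binomial_transform g n = (\<Sum>i<n. (-1)^i * of_nat (n choose Suc i) * g (Suc i))"

lemma binomial_transform_0 [simp]: "binomial_transform g 0 = 0"
  by (simp add: binomial_transform_def)

lemma binomial_transform_Suc:
  "binomial_transform g (Suc n) =
     binomial_transform g n + (\<Sum>i<Suc n. (-1)^i * of_nat (n choose i) * g (Suc i))"
  by (simp add: binomial_transform_def sum.distrib[symmetric] algebra_simps binomial_eq_0)

lemma binomial_transform_divide:
  fixes g :: "nat \<Rightarrow> 'a::field_char_0"
  shows "binomial_transform (\<lambda>m. g m / of_nat m) n = (\<Sum>k=1..n. binomial_transform g k / of_nat k)"
proof (induction n)
  case 0
  then show ?case by simp
next
  case (Suc n)
  have "(-1)^i * of_nat (n choose i) * (g (Suc i) / of_nat (Suc i))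
      = (-1)^i * of_nat (Suc n choose Suc i) * g (Suc i) / (of_nat (Suc n) :: 'a)" for i
  proof -
    have "of_nat (Suc n) * (of_nat (n choose i) :: 'a)
        = of_nat (Suc n choose Suc i) * of_nat (Suc i)"
      by (metis Suc_times_binomial_eq of_nat_mult)
    then show ?thesis
      by (simp add: field_simps del: of_nat_Suc binomial_Suc_Suc)
  qed
  then have "(\<Sum>i<Suc n. (-1)^i * of_nat (n choose i) * (g (Suc i) / of_nat (Suc i)))
      = binomial_transform g (Suc n) / of_nat (Suc n)"
    by (simp only: binomial_transform_def sum_divide_distrib)
  then show ?case
    using Suc by (simp add: binomial_transform_Suc[of "\<lambda>m. g m / of_nat m"] del: of_nat_Suc)
qed

lemma sum_atMost_nested_swap:
  "(\<Sum>i\<le>(k::nat). \<Sum>j\<le>i. h i j) = (\<Sum>j\<le>k. \<Sum>i=j..k. h i j :: 'a::comm_monoid_add)"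
proof (induction k)
  case (Suc k)
  have "(\<Sum>j\<le>k. \<Sum>i=j..Suc k. h i j) = (\<Sum>j\<le>k. (\<Sum>i=j..k. h i j) + h (Suc k) j)"
    by (intro sum.cong refl) (simp add: add.commute)
  then show ?case using Suc by (simp add: sum.distrib)
qed simp

lemma alternating_sum_binomial_tail:
  assumes "j \<le> k"
  shows "(\<Sum>i=j..k. (-1)^i * (of_nat (Suc k choose Suc i) :: 'a::comm_ring_1))
       = (-1)^j * of_nat (k choose j)"
proof -
  define f :: "nat \<Rightarrow> 'a" where "f i = - ((-1)^i * of_nat (k choose i))" for i
  have "(\<Sum>i=j..k. (-1)^i * (of_nat (Suc k choose Suc i) :: 'a)) = (\<Sum>i=j..k. f (Suc i) - f i)"
    by (intro sum.cong refl) (simp add: f_def algebra_simps)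
  also have "\<dots> = f (Suc k) - f j"
    using assms by (intro sum_Suc_diff) simp
  finally show ?thesis by (simp add: f_def binomial_eq_0)
qed

lemma binomial_transform_partial_sums:
  "binomial_transform (\<lambda>m. \<Sum>j=1..m. g j) (Suc k) =
     binomial_transform g (Suc k) - binomial_transform g k"
proof -
  let ?c = "\<lambda>i. (-1)^i * of_nat (Suc k choose Suc i)"
  have "binomial_transform (\<lambda>m. \<Sum>j=1..m. g j) (Suc k) = (\<Sum>i\<le>k. ?c i * (\<Sum>j\<le>i. g (Suc j)))"
    by (simp add: binomial_transform_def sum.atLeast1_atMost_eq lessThan_Suc_atMost
        del: binomial_Suc_Suc)
  also have "\<dots> = (\<Sum>i\<le>k. \<Sum>j\<le>i. ?c i * g (Suc j))"
    by (simp add: sum_distrib_left del: binomial_Suc_Suc)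
  also have "\<dots> = (\<Sum>j\<le>k. \<Sum>i=j..k. ?c i * g (Suc j))"
    by (rule sum_atMost_nested_swap)
  also have "\<dots> = (\<Sum>j\<le>k. (-1)^j * of_nat (k choose j) * g (Suc j))"
    by (simp add: sum_distrib_right[symmetric] alternating_sum_binomial_tail del: binomial_Suc_Suc)
  also have "\<dots> = binomial_transform g (Suc k) - binomial_transform g k"
    by (simp add: binomial_transform_Suc lessThan_Suc_atMost)
  finally show ?thesis .
qed

lemma binomial_transform_one: "0 < n \<Longrightarrow> binomial_transform (\<lambda>_. 1) n = 1"
proof (induction n)
  case (Suc n)
  show ?case
  proof (cases n)
    case 0
    then show ?thesis by (simp add: binomial_transform_def)
  next
    case (Suc m)
    have "(\<Sum>i\<le>n. (-1)^i * of_nat (n choose i) :: 'a) = 0"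
      using choose_alternating_sum[of n] Suc by (simp add: mult.commute)
    then show ?thesis
      using Suc.IH Suc by (simp add: binomial_transform_Suc lessThan_Suc_atMost)
  qed
qed simp

lemma gbinomial_Suc_lower:
  "(a gchoose Suc k) = (a gchoose k) * (a - of_nat k) / of_nat (Suc k)"
  for a :: "'a::field_char_0"
proof -
  have "of_nat (Suc k) * (a gchoose Suc k) = (a gchoose k) * (a - of_nat k)"
    using gbinomial_mult_1[of a k] by (simp add: algebra_simps)
  then show ?thesis
    by (simp add: eq_divide_eq mult.commute del: of_nat_Suc)
qed

lemma neg_one_power_gbinomial_eq_prod:
  "(-1)^m * ((a - 1) gchoose m) = (\<Prod>j=1..m. 1 - a / of_nat j)"
  for a :: "'a::field_char_0"
proof (induction m)
  case (Suc m)
  have "(-1)^Suc m * ((a - 1) gchoose Suc m)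
      = (-1)^m * ((a - 1) gchoose m) * ((of_nat (Suc m) - a) / of_nat (Suc m))"
    by (simp add: gbinomial_Suc_lower algebra_simps)
  also have "(of_nat (Suc m) - a) / of_nat (Suc m) = 1 - a / of_nat (Suc m)"
    by (simp add: diff_divide_distrib del: of_nat_Suc)
  finally show ?case using Suc by simp
qed simp

section \<open>p-integral rationals and harmonic numbers\<close>

definition p_integral :: "nat \<Rightarrow> rat set" where
  "p_integral p = {of_int a / of_int b | a b. b \<noteq> 0 \<and> coprime b (int p)}"

lemma p_integral_of_int [simp]: "of_int a \<in> p_integral p"
  unfolding p_integral_def by (intro CollectI exI[of _ a] exI[of _ 1]) simp

lemma p_integral_of_nat [simp]: "of_nat n \<in> p_integral p"
  using p_integral_of_int[of "int n"] by simp

lemma p_integral_0 [simp]: "0 \<in> p_integral p"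
  and p_integral_1 [simp]: "1 \<in> p_integral p"
  using p_integral_of_int[of 0 p] p_integral_of_int[of 1 p] by simp_all

lemma p_integral_add [intro]:
  assumes "x \<in> p_integral p" "y \<in> p_integral p"
  shows "x + y \<in> p_integral p"
proof -
  obtain a b c d :: int where "b \<noteq> 0" "coprime b (int p)" "x = of_int a / of_int b"
    "d \<noteq> 0" "coprime d (int p)" "y = of_int c / of_int d"
    using assms unfolding p_integral_def by blast
  then show ?thesis unfolding p_integral_def
    by (intro CollectI exI[of _ "a * d + c * b"] exI[of _ "b * d"]) (simp add: field_simps)
qed

lemma p_integral_mult [intro]:
  assumes "x \<in> p_integral p" "y \<in> p_integral p"
  shows "x * y \<in> p_integral p"
proof -
  obtain a b c d :: int where "b \<noteq> 0" "coprime b (int p)" "x = of_int a / of_int b"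
    "d \<noteq> 0" "coprime d (int p)" "y = of_int c / of_int d"
    using assms unfolding p_integral_def by blast
  then show ?thesis unfolding p_integral_def
    by (intro CollectI exI[of _ "a * c"] exI[of _ "b * d"]) simp
qed

lemma p_integral_diff [intro]:
  assumes "x \<in> p_integral p" "y \<in> p_integral p"
  shows "x - y \<in> p_integral p"
  using p_integral_add[OF assms(1) p_integral_mult[OF p_integral_of_int[of "-1"] assms(2)]] by simp

lemma p_integral_sum [intro]:
  "(\<And>i. i \<in> A \<Longrightarrow> f i \<in> p_integral p) \<Longrightarrow> sum f A \<in> p_integral p"
  by (induction A rule: infinite_finite_induct) auto

lemma p_integral_power [intro]: "x \<in> p_integral p \<Longrightarrow> x ^ n \<in> p_integral p"
  by (induction n) auto

lemma p_integral_inverse_of_nat: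
  assumes "prime p" "\<not> p dvd k"
  shows "1 / of_nat k \<in> p_integral p"
proof -
  have "k \<noteq> 0"
    using assms(2) by (metis dvd_0_right)
  moreover have "coprime (int k) (int p)"
    using prime_imp_coprime[OF assms] by (simp add: coprime_commute)
  ultimately show ?thesis
    unfolding p_integral_def by (intro CollectI exI[of _ 1] exI[of _ "int k"]) simp
qed

lemma p_integral_divide_power:
  assumes "x \<in> p_integral p" "prime p" "0 < j" "j < p"
  shows "x / of_nat j ^ e \<in> p_integral p"
proof -
  have "\<not> p dvd j"
    using assms(3,4) by (auto dest!: dvd_imp_le)
  then have "x * (1 / of_nat j) ^ e \<in> p_integral p"
    using assms(1,2) p_integral_inverse_of_nat by blast
  then show ?thesis by (simp add: power_one_over)
qed

definition harmonic :: "nat \<Rightarrow> rat" where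
  "harmonic m = (\<Sum>j=1..m. 1 / of_nat j)"

lemma harmonic_p_integral:
  "prime p \<Longrightarrow> m < p \<Longrightarrow> harmonic m \<in> p_integral p"
  unfolding harmonic_def
  using p_integral_divide_power[OF p_integral_1, where e = 1] by (intro p_integral_sum) auto

lemma prod_one_minus_prime_divide_expansion:
  assumes "prime p" "m < p"
  shows "\<exists>E\<in>p_integral p.
           (\<Prod>j=1..m. 1 - of_nat p / of_nat j) = 1 - of_nat p * harmonic m + of_nat p^2 * E"
  using assms(2)
proof (induction m)
  case 0
  show ?case by (intro bexI[of _ 0]) (simp_all add: harmonic_def)
next
  case (Suc m)
  then obtain E where E: "E \<in> p_integral p"
    and prod: "(\<Prod>j=1..m. 1 - of_nat p / of_nat j) = 1 - of_nat p * harmonic m + of_nat p^2 * E"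
    by auto
  define q :: rat where "q = 1 / of_nat (Suc m)"
  have q: "q \<in> p_integral p"
    unfolding q_def using assms(1) Suc.prems
    by (intro p_integral_inverse_of_nat) (auto dest!: dvd_imp_le)
  define E' where "E' = harmonic m * q + E - of_nat p * E * q"
  have "E' \<in> p_integral p"
    unfolding E'_def using E q harmonic_p_integral[OF assms(1), of m] Suc.prems
    by (intro p_integral_add p_integral_diff p_integral_mult) simp_all
  moreover have "(\<Prod>j=1..Suc m. 1 - of_nat p / of_nat j)
      = 1 - of_nat p * harmonic (Suc m) + of_nat p^2 * E'"
    unfolding prod.cl_ivl_Suc prod
    by (simp add: harmonic_def q_def E'_def algebra_simps power2_eq_square del: of_nat_Suc)
  ultimately show ?case by blast
qed

lemma binomial_pred_prime_expansion:
  assumes "prime p" "k < p"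
  shows "\<exists>E\<in>p_integral p.
           (-1)^k * of_nat ((p - 1) choose k) = 1 - of_nat p * harmonic k + of_nat p^2 * E"
proof -
  have "(-1)^k * (of_nat ((p - 1) choose k) :: rat) = (-1)^k * ((of_nat p - 1) gchoose k)"
    using prime_gt_0_nat[OF assms(1)] by (simp add: binomial_gbinomial of_nat_diff)
  also have "\<dots> = (\<Prod>j=1..k. 1 - of_nat p / of_nat j)"
    by (rule neg_one_power_gbinomial_eq_prod)
  finally show ?thesis
    using prod_one_minus_prime_divide_expansion[OF assms] by simp
qed

lemma harmonic_pred_prime:
  assumes "prime p" "odd p"
  shows "\<exists>Q\<in>p_integral p. harmonic (p - 1) = of_nat p * Q"
proof -
  have p2: "p \<ge> 2" using prime_ge_2_nat assms(1) by blast
  define Q :: rat where "Q = (\<Sum>j=1..p-1. 1 / of_nat j * (1 / of_nat (p - j))) * (1 / of_nat 2)"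
  have "\<not> p dvd 2"
    using assms primes_dvd_imp_eq[OF assms(1) two_is_prime_nat] by auto
  then have "Q \<in> p_integral p"
    unfolding Q_def using assms(1)
    by (intro p_integral_mult p_integral_sum p_integral_inverse_of_nat) (auto dest!: dvd_imp_le)
  moreover have "harmonic (p - 1) = of_nat p * Q"
  proof -
    have pair: "1 / of_nat j + 1 / of_nat (p - j)
        = of_nat p * (1 / of_nat j * (1 / of_nat (p - j)) :: rat)"
      if "j \<in> {1..p-1}" for j
    proof -
      have "of_nat (p - j) = (of_nat p - of_nat j :: rat)" "of_nat p - of_nat j \<noteq> (0 :: rat)"
        using that by (auto simp: of_nat_diff)
      then show ?thesis
        using that by (simp add: field_simps)
    qed
    have "2 * harmonic (p - 1) = (\<Sum>j=1..p-1. 1 / of_nat j + 1 / (of_nat (p - j) :: rat))"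
      using sum.atLeastAtMost_rev[of "\<lambda>j. 1 / (of_nat j :: rat)" 1 "p - 1"] p2
      by (simp add: harmonic_def sum.distrib)
    also have "\<dots> = of_nat p * (\<Sum>j=1..p-1. 1 / of_nat j * (1 / of_nat (p - j)))"
      unfolding sum_distrib_left by (intro sum.cong refl pair)
    also have "\<dots> = 2 * (of_nat p * Q)"
      by (simp add: Q_def)
    finally show ?thesis by simp
  qed
  ultimately show ?thesis by blast
qed

section \<open>Nested harmonic sums\<close>

definition index_tuples :: "(nat \<Rightarrow> nat \<Rightarrow> bool) \<Rightarrow> nat \<Rightarrow> nat \<Rightarrow> nat list set" where
  "index_tuples R n N = {ks. length ks = n \<and> sorted_wrt R ks \<and> set ks \<subseteq> {1..N}}"

lemma finite_index_tuples: "finite (index_tuples R n N)"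
proof -
  have "finite {ks. set ks \<subseteq> {1..N} \<and> length ks = n}"
    by (rule finite_lists_length_eq) simp
  then show ?thesis
    unfolding index_tuples_def by (rule rev_finite_subset) auto
qed

lemma index_tuples_0 [simp]: "index_tuples R 0 N = {[]}"
  by (auto simp: index_tuples_def)

lemma index_tuples_Suc:
  assumes "\<And>m k. m \<in> {1..N} \<Longrightarrow> k \<in> {1..N} \<and> R k m \<longleftrightarrow> k \<in> {1..b m}"
  shows "index_tuples R (Suc n) N
       = (\<lambda>(m, ks). ks @ [m]) ` (SIGMA m:{1..N}. index_tuples R n (b m))"
proof (intro set_eqI iffI)
  fix x assume x: "x \<in> index_tuples R (Suc n) N"
  then have "x \<noteq> []"
    by (auto simp: index_tuples_def)
  then obtain ks m where x_eq: "x = ks @ [m]"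
    by (cases x rule: rev_exhaust) auto
  have m: "m \<in> {1..N}" and ks: "length ks = n" "sorted_wrt R ks"
    and below: "\<forall>k\<in>set ks. k \<in> {1..N} \<and> R k m"
    using x unfolding x_eq by (auto simp: index_tuples_def sorted_wrt_append)
  have "ks \<in> index_tuples R n (b m)"
    using ks below assms[OF m] by (auto simp: index_tuples_def)
  with m show "x \<in> (\<lambda>(m, ks). ks @ [m]) ` (SIGMA m:{1..N}. index_tuples R n (b m))"
    unfolding x_eq by (intro image_eqI[of _ _ "(m, ks)"]) auto
next
  fix x assume "x \<in> (\<lambda>(m, ks). ks @ [m]) ` (SIGMA m:{1..N}. index_tuples R n (b m))"
  then obtain m ks where x_eq: "x = ks @ [m]" and m: "m \<in> {1..N}"
    and ks: "ks \<in> index_tuples R n (b m)"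
    by auto
  have "\<forall>k\<in>set ks. k \<in> {1..N} \<and> R k m"
    using ks assms[OF m] by (auto simp: index_tuples_def)
  with m ks show "x \<in> index_tuples R (Suc n) N"
    unfolding x_eq by (auto simp: index_tuples_def sorted_wrt_append)
qed

lemma sum_index_tuples_Suc:
  assumes "\<And>m k. m \<in> {1..N} \<Longrightarrow> k \<in> {1..N} \<and> R k m \<longleftrightarrow> k \<in> {1..b m}"
  shows "(\<Sum>ks\<in>index_tuples R (Suc n) N. F ks)
       = (\<Sum>m=1..N. \<Sum>ks\<in>index_tuples R n (b m). F (ks @ [m]))"
proof -
  have "index_tuples R (Suc n) N
      = (\<lambda>(m, ks). ks @ [m]) ` (SIGMA m:{1..N}. index_tuples R n (b m))"
    using assms by (rule index_tuples_Suc)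
  moreover have "inj_on (\<lambda>(m, ks). ks @ [m]) (SIGMA m:{1..N}. index_tuples R n (b m))"
    by (auto simp: inj_on_def)
  ultimately have "(\<Sum>ks\<in>index_tuples R (Suc n) N. F ks)
      = (\<Sum>(m, ks)\<in>(SIGMA m:{1..N}. index_tuples R n (b m)). F (ks @ [m]))"
    by (simp add: sum.reindex case_prod_unfold)
  also have "\<dots> = (\<Sum>m=1..N. \<Sum>ks\<in>index_tuples R n (b m). F (ks @ [m]))"
    by (rule sum.Sigma[symmetric]) (simp_all add: finite_index_tuples)
  finally show ?thesis .
qed

definition inverse_power_prod :: "nat list \<Rightarrow> nat list \<Rightarrow> rat" where
  "inverse_power_prod s ks = (\<Prod>i<length s. 1 / of_nat (ks ! i) ^ (s ! i))"

lemma inverse_power_prod_snoc: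
  "length ks = length s \<Longrightarrow>
     inverse_power_prod (s @ [a]) (ks @ [m]) = inverse_power_prod s ks / of_nat m ^ a"
proof -
  assume len: "length ks = length s"
  have "(\<Prod>i<length s. 1 / of_nat ((ks @ [m]) ! i) ^ ((s @ [a]) ! i) :: rat)
      = (\<Prod>i<length s. 1 / of_nat (ks ! i) ^ (s ! i))"
    using len by (intro prod.cong) (auto simp: nth_append)
  then show ?thesis
    using len by (simp add: inverse_power_prod_def nth_append)
qed

lemma Ssum_altdef: "Ssum s N = (\<Sum>ks\<in>index_tuples (\<le>) (length s) N. inverse_power_prod s ks)"
  by (simp add: Ssum_def index_tuples_def inverse_power_prod_def)

lemma Hsum_altdef: "Hsum s N = (\<Sum>ks\<in>index_tuples (<) (length s) N. inverse_power_prod s ks)"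
  by (simp add: Hsum_def index_tuples_def inverse_power_prod_def)

lemma sum_inverse_power_prod_snoc:
  assumes "\<And>m k. m \<in> {1..N} \<Longrightarrow> k \<in> {1..N} \<and> R k m \<longleftrightarrow> k \<in> {1..b m}"
  shows "(\<Sum>ks\<in>index_tuples R (length (s @ [a])) N. inverse_power_prod (s @ [a]) ks)
       = (\<Sum>m=1..N. (\<Sum>ks\<in>index_tuples R (length s) (b m). inverse_power_prod s ks) / of_nat m ^ a)"
proof -
  have "(\<Sum>ks\<in>index_tuples R (Suc (length s)) N. inverse_power_prod (s @ [a]) ks)
      = (\<Sum>m=1..N. \<Sum>ks\<in>index_tuples R (length s) (b m). inverse_power_prod (s @ [a]) (ks @ [m]))"
    using assms by (rule sum_index_tuples_Suc)
  also have "\<dots>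
      = (\<Sum>m=1..N. (\<Sum>ks\<in>index_tuples R (length s) (b m). inverse_power_prod s ks) / of_nat m ^ a)"
    unfolding sum_divide_distrib
    by (intro sum.cong refl inverse_power_prod_snoc) (simp add: index_tuples_def)
  finally show ?thesis by simp
qed

lemma Ssum_Nil [simp]: "Ssum [] N = 1"
  by (simp add: Ssum_altdef inverse_power_prod_def)

lemma Hsum_Nil [simp]: "Hsum [] N = 1"
  by (simp add: Hsum_altdef inverse_power_prod_def)

lemma Ssum_snoc: "Ssum (s @ [a]) N = (\<Sum>m=1..N. Ssum s m / of_nat m ^ a)"
  unfolding Ssum_altdef by (rule sum_inverse_power_prod_snoc[where b = "\<lambda>m. m"]) auto

lemma Hsum_snoc: "Hsum (s @ [a]) N = (\<Sum>m=1..N. Hsum s (m - 1) / of_nat m ^ a)"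
  unfolding Hsum_altdef by (rule sum_inverse_power_prod_snoc[where b = "\<lambda>m. m - 1"]) auto

definition Ssum_summand :: "nat list \<Rightarrow> nat \<Rightarrow> rat" where
  "Ssum_summand s m = Ssum (butlast s) m / of_nat m ^ last s"

lemma Ssum_summand_snoc [simp]: "Ssum_summand (u @ [a]) = (\<lambda>m. Ssum u m / of_nat m ^ a)"
  by (simp add: Ssum_summand_def fun_eq_iff)

lemma Ssum_eq_sum_summand: "s \<noteq> [] \<Longrightarrow> Ssum s N = (\<Sum>m=1..N. Ssum_summand s m)"
  by (cases s rule: rev_exhaust) (simp_all add: Ssum_snoc)

lemma Ssum_p_integral: "prime p \<Longrightarrow> m < p \<Longrightarrow> Ssum s m \<in> p_integral p"
proof (induction s arbitrary: m rule: rev_induct)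
  case (snoc a s)
  then show ?case
    unfolding Ssum_snoc by (intro p_integral_sum p_integral_divide_power) auto
qed simp

lemma Ssum_summand_p_integral:
  "prime p \<Longrightarrow> 0 < m \<Longrightarrow> m < p \<Longrightarrow> Ssum_summand s m \<in> p_integral p"
  unfolding Ssum_summand_def by (intro p_integral_divide_power Ssum_p_integral)

section \<open>The dual composition\<close>

lemma composition_snoc [simp]: "composition (u @ [b]) \<longleftrightarrow> composition u \<and> 0 < b"
  by (auto simp: composition_def)

lemma weight_Nil [simp]: "weight [] = 0"
  and weight_snoc [simp]: "weight (u @ [b]) = weight u + b"
  by (simp_all add: weight_def)

lemma weight_pos: "composition c \<Longrightarrow> c \<noteq> [] \<Longrightarrow> 0 < weight c"
  by (cases c rule: rev_exhaust) auto

lemma Pset_snoc: "Pset (u @ [b]) = (if u = [] then {} else insert (weight u) (Pset u))"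
proof -
  have "Pset (u @ [b]) = (\<lambda>j. sum_list (take j u)) ` {1..<Suc (length u)}"
    unfolding Pset_def by (force simp: image_def)
  also have "{1..<Suc (length u)} = (if u = [] then {} else insert (length u) {1..<length u})"
    by (cases u) auto
  finally show ?thesis
    unfolding Pset_def weight_def by (auto simp: image_def)
qed

lemma Pset_subset: "composition c \<Longrightarrow> Pset c \<subseteq> {1..<weight c}"
proof (induction c rule: rev_induct)
  case (snoc b u)
  then show ?case
    using weight_pos[of u] by (auto simp: Pset_snoc)
qed (simp add: Pset_def)

lemma insert_greatest_eq_iff:
  fixes a b :: "'a::linorder"
  assumes "\<forall>x\<in>A. x < a" "\<forall>x\<in>B. x < b"
  shows "insert a A = insert b B \<longleftrightarrow> a = b \<and> A = B"
proof
  assume eq: "insert a A = insert b B"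
  then have "a = b"
    using assms by (metis insertCI insertE less_asym)
  moreover have "A = insert a A - {a}" "B = insert b B - {b}"
    using assms by auto
  ultimately show "a = b \<and> A = B"
    using eq by metis
qed simp

lemma composition_eqI:
  assumes "composition c" "composition d" "weight c = weight d" "Pset c = Pset d"
  shows "c = d"
  using assms
proof (induction c arbitrary: d rule: rev_induct)
  case Nil
  then show ?case using weight_pos[of d] by auto
next
  case (snoc a u)
  then have "d \<noteq> []" using weight_pos[of "u @ [a]"] by auto
  then obtain v b where d: "d = v @ [b]" by (cases d rule: rev_exhaust) auto
  have P: "(if u = [] then {} else insert (weight u) (Pset u))
         = (if v = [] then {} else insert (weight v) (Pset v))"
    using snoc.prems(4) unfolding d Pset_snoc .
  have "u = v"
  proof (cases "u = []")
    case True
    then show ?thesis using P by (simp split: if_splits)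
  next
    case False
    then have "v \<noteq> []" using P by (simp split: if_splits)
    then have "weight u = weight v \<and> Pset u = Pset v"
      using False snoc.prems d Pset_subset[of u] Pset_subset[of v]
      by (subst insert_greatest_eq_iff[symmetric]) (auto simp: Pset_snoc)
    then show ?thesis
      using snoc.prems d by (intro snoc.IH) simp_all
  qed
  then show ?case using snoc.prems d by simp
qed

definition is_dual :: "nat list \<Rightarrow> nat list \<Rightarrow> bool" where
  "is_dual s c \<longleftrightarrow> composition c \<and> weight c = weight s \<and> Pset c = {1..weight s - 1} - Pset s"

lemma dual_eqI: "is_dual s c \<Longrightarrow> dual s = c"
  unfolding dual_def by (rule the_equality) (auto simp: is_dual_def intro: composition_eqI)

lemma is_dual_singleton_one: "is_dual [1] [1]"
  by (simp add: is_dual_def composition_def weight_def Pset_def)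

lemma is_dual_snoc_Suc:
  assumes "composition (u @ [b])" "is_dual (u @ [b]) d"
  shows "is_dual (u @ [Suc b]) (d @ [1])"
proof -
  define W where "W = weight (u @ [b])"
  have "0 < W" "d \<noteq> []"
    using assms by (auto simp: W_def is_dual_def)
  moreover have "Pset (u @ [b]) \<subseteq> {1..<W}"
    unfolding W_def by (rule Pset_subset[OF assms(1)])
  ultimately have "insert W ({1..W - 1} - Pset (u @ [b])) = {1..W} - Pset (u @ [b])"
    by auto
  then show ?thesis
    using assms by (auto simp: is_dual_def Pset_snoc W_def)
qed

lemma is_dual_snoc_one:
  assumes "composition u" "u \<noteq> []" "is_dual u (v @ [c])"
  shows "is_dual (u @ [1]) (v @ [Suc c])"
proof -
  have "0 < weight u"
    using weight_pos[OF assms(1,2)] .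
  then have "{1..weight u} - insert (weight u) (Pset u) = {1..weight u - 1} - Pset u"
    by auto
  then show ?thesis
    using assms by (auto simp: is_dual_def Pset_snoc)
qed

lemma is_dual_dual: "composition s \<Longrightarrow> s \<noteq> [] \<Longrightarrow> is_dual s (dual s)"
proof (induction "weight s" arbitrary: s rule: less_induct)
  case less
  obtain u x where s: "s = u @ [x]"
    using less.prems(2) by (cases s rule: rev_exhaust) auto
  consider "x = 1" "u = []" | "x = 1" "u \<noteq> []" | b where "x = Suc b" "0 < b"
    using less.prems(1) s by (cases x) auto
  then show ?case
  proof cases
    case 1
    then show ?thesis using s is_dual_singleton_one dual_eqI by simp
  next
    case 2
    then have "is_dual u (dual u)"
      using less s by simp
    moreover from this obtain v c where "dual u = v @ [c]"
      using weight_pos[of u] 2 less.prems s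
      by (cases "dual u" rule: rev_exhaust) (auto simp: is_dual_def)
    ultimately show ?thesis
      using is_dual_snoc_one[of u v c] dual_eqI 2 less.prems s by simp
  next
    case 3
    then have "is_dual (u @ [b]) (dual (u @ [b]))"
      using less s by simp
    then have "is_dual s (dual (u @ [b]) @ [1])"
      using is_dual_snoc_Suc[of u b] 3 less.prems s by simp
    then show ?thesis
      using dual_eqI by metis
  qed
qed

lemma dual_singleton_one: "dual [1] = [1]"
  by (rule dual_eqI[OF is_dual_singleton_one])

lemma dual_snoc_Suc: "composition (u @ [b]) \<Longrightarrow> dual (u @ [Suc b]) = dual (u @ [b]) @ [1]"
  by (intro dual_eqI is_dual_snoc_Suc is_dual_dual) auto

lemma dual_snoc_one:
  "composition u \<Longrightarrow> u \<noteq> [] \<Longrightarrow> dual u = v @ [c] \<Longrightarrow> dual (u @ [1]) = v @ [Suc c]"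
  by (metis dual_eqI is_dual_dual is_dual_snoc_one)

lemma dual_ne_Nil: "composition s \<Longrightarrow> s \<noteq> [] \<Longrightarrow> dual s \<noteq> []"
  using is_dual_dual[of s] weight_pos[of s] by (auto simp: is_dual_def)

section \<open>Hoffman's duality\<close>

lemma Ssum_snoc_one_binomial_transform:
  assumes "\<And>k. 0 < k \<Longrightarrow> Ssum v k = binomial_transform g k"
  shows "Ssum (v @ [1]) n = binomial_transform (\<lambda>m. g m / of_nat m) n"
  unfolding Ssum_snoc binomial_transform_divide using assms by (intro sum.cong) auto

lemma Ssum_snoc_Suc_binomial_transform:
  assumes "\<And>k. 0 < k \<Longrightarrow> Ssum (v @ [c]) k = binomial_transform g k"
  shows "Ssum (v @ [Suc c]) n = binomial_transform (\<lambda>m. (\<Sum>j=1..m. g j) / of_nat m) n"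
proof -
  have "Ssum v k / of_nat k ^ Suc c = binomial_transform (\<lambda>m. \<Sum>j=1..m. g j) k / of_nat k"
    if "0 < k" for k
  proof -
    obtain j where k: "k = Suc j"
      using \<open>0 < k\<close> gr0_conv_Suc by blast
    have "Ssum v k / of_nat k ^ c = Ssum (v @ [c]) (Suc j) - Ssum (v @ [c]) j"
      by (simp add: Ssum_snoc k)
    also have "\<dots> = binomial_transform g (Suc j) - binomial_transform g j"
    proof (cases j)
      case 0
      then show ?thesis using assms[of 1] by (simp add: Ssum_snoc)
    qed (simp add: assms)
    also have "\<dots> = binomial_transform (\<lambda>m. \<Sum>j=1..m. g j) k"
      unfolding k by (rule binomial_transform_partial_sums[symmetric])
    finally show ?thesis
      by (metis divide_divide_eq_left mult.commute power_Suc)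
  qed
  then have "Ssum (v @ [Suc c]) n
      = (\<Sum>k=1..n. binomial_transform (\<lambda>m. \<Sum>j=1..m. g j) k / of_nat k)"
    unfolding Ssum_snoc by (intro sum.cong) auto
  also have "\<dots> = binomial_transform (\<lambda>m. (\<Sum>j=1..m. g j) / of_nat m) n"
    by (rule binomial_transform_divide[symmetric])
  finally show ?thesis .
qed

lemma Ssum_dual_singleton_one:
  "Ssum (dual [1]) n = binomial_transform (Ssum_summand [1]) n"
proof -
  have "dual [1] = [] @ [1]" "Ssum_summand [1] = (\<lambda>m. 1 / of_nat m)"
    using dual_singleton_one by (simp_all add: Ssum_summand_def fun_eq_iff)
  then show ?thesis
    by (simp only:) (rule Ssum_snoc_one_binomial_transform, simp add: binomial_transform_one)
qed

lemma Ssum_dual_snoc_one: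
  assumes "composition u" "u \<noteq> []"
    and "\<And>k. Ssum (dual u) k = binomial_transform (Ssum_summand u) k"
  shows "Ssum (dual (u @ [1])) n = binomial_transform (Ssum_summand (u @ [1])) n"
proof -
  obtain v c where v: "dual u = v @ [c]"
    using dual_ne_Nil[OF assms(1,2)] by (cases "dual u" rule: rev_exhaust) auto
  have "Ssum (v @ [Suc c]) n
      = binomial_transform (\<lambda>m. (\<Sum>j=1..m. Ssum_summand u j) / of_nat m) n"
    using assms(3) unfolding v by (intro Ssum_snoc_Suc_binomial_transform)
  then show ?thesis
    unfolding dual_snoc_one[OF assms(1,2) v] Ssum_summand_snoc power_one_right
      Ssum_eq_sum_summand[OF assms(2)] .
qed

lemma Ssum_dual_snoc_Suc:
  assumes "composition (u @ [b])"
    and "\<And>k. Ssum (dual (u @ [b])) k = binomial_transform (Ssum_summand (u @ [b])) k"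
  shows "Ssum (dual (u @ [Suc b])) n = binomial_transform (Ssum_summand (u @ [Suc b])) n"
proof -
  have "Ssum (dual (u @ [b]) @ [1]) n
      = binomial_transform (\<lambda>m. Ssum_summand (u @ [b]) m / of_nat m) n"
    using assms(2) by (intro Ssum_snoc_one_binomial_transform)
  then show ?thesis
    by (simp add: dual_snoc_Suc[OF assms(1)] divide_divide_eq_left mult.commute)
qed

lemma Ssum_dual_eq_binomial_transform:
  "composition s \<Longrightarrow> s \<noteq> [] \<Longrightarrow> Ssum (dual s) n = binomial_transform (Ssum_summand s) n"
proof (induction "weight s" arbitrary: s n rule: less_induct)
  case less
  obtain u x where s: "s = u @ [x]"
    using less.prems(2) by (cases s rule: rev_exhaust) auto
  consider "x = 1" "u = []" | "x = 1" "u \<noteq> []" | b where "x = Suc b" "0 < b"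
    using less.prems(1) s by (cases x) auto
  then show ?case
  proof cases
    case 1
    then show ?thesis
      using s Ssum_dual_singleton_one by simp
  next
    case 2
    then have "Ssum (dual u) k = binomial_transform (Ssum_summand u) k" for k
      using less s by simp
    then show ?thesis
      using Ssum_dual_snoc_one[of u n] less.prems s 2 by simp
  next
    case 3
    then have "Ssum (dual (u @ [b])) k = binomial_transform (Ssum_summand (u @ [b])) k" for k
      using less s by simp
    then show ?thesis
      using Ssum_dual_snoc_Suc[of u b n] less.prems s 3 by simp
  qed
qed

section \<open>Sums over coarsenings\<close>

definition add_to_last :: "nat \<Rightarrow> nat list \<Rightarrow> nat list" where
  "add_to_last a t = butlast t @ [last t + a]"

lemma coarsening_Nil_iff: "coarsening t [] \<longleftrightarrow> t = []"
  by (auto simp: coarsening_def)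

lemma coarsening_snoc_cases:
  assumes "coarsening t (s @ [a])"
  obtains t' where "coarsening t' s" "t = t' @ [a]"
    | t' where "coarsening t' s" "s \<noteq> []" "t = add_to_last a t'"
proof -
  obtain gs where ne: "\<forall>g\<in>set gs. g \<noteq> []" and gs: "concat gs = s @ [a]" and t: "t = map sum_list gs"
    using assms unfolding coarsening_def by blast
  obtain gs' g where gs_eq: "gs = gs' @ [g]"
    using gs by (cases gs rule: rev_exhaust) auto
  obtain g' where g: "g = g' @ [a]" and s: "s = concat gs' @ g'"
    using ne gs unfolding gs_eq by (cases g rule: rev_exhaust) auto
  show thesis
  proof (cases "g' = []")
    case True
    then have "coarsening (map sum_list gs') s"
      unfolding coarsening_def using ne s gs_eq by (intro exI[of _ gs']) auto
    then show thesis
      using that(1) t gs_eq g True by simp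
  next
    case False
    then have "coarsening (map sum_list (gs' @ [g'])) s"
      unfolding coarsening_def using ne s gs_eq by (intro exI[of _ "gs' @ [g']"]) auto
    then show thesis
      using that(2) t gs_eq g s False by (simp add: add_to_last_def)
  qed
qed

lemma coarsening_snoc_appendI:
  assumes "coarsening t s"
  shows "coarsening (t @ [a]) (s @ [a])"
proof -
  obtain gs where "\<forall>g\<in>set gs. g \<noteq> []" "concat gs = s" "t = map sum_list gs"
    using assms unfolding coarsening_def by blast
  then show ?thesis
    unfolding coarsening_def by (intro exI[of _ "gs @ [[a]]"]) auto
qed

lemma coarsening_snoc_add_to_lastI:
  assumes "coarsening t s" "s \<noteq> []"
  shows "coarsening (add_to_last a t) (s @ [a])"
proof -
  obtain gs where ne: "\<forall>g\<in>set gs. g \<noteq> []" and gs: "concat gs = s" and t: "t = map sum_list gs"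
    using assms(1) unfolding coarsening_def by blast
  obtain hs h where "gs = hs @ [h]"
    using gs assms(2) by (cases gs rule: rev_exhaust) auto
  then show ?thesis
    unfolding coarsening_def using ne gs t
    by (intro exI[of _ "hs @ [h @ [a]]"]) (auto simp: add_to_last_def)
qed

lemma coarsening_ne_Nil: "coarsening t s \<Longrightarrow> s \<noteq> [] \<Longrightarrow> t \<noteq> []"
  by (auto simp: coarsening_def)

lemma coarsening_composition:
  assumes "coarsening t s" "composition s"
  shows "composition t"
proof -
  obtain gs where ne: "\<forall>g\<in>set gs. g \<noteq> []" and gs: "concat gs = s" and t: "t = map sum_list gs"
    using assms(1) unfolding coarsening_def by blast
  have "0 < sum_list g" if "g \<in> set gs" for g
  proof -
    obtain x where "x \<in> set g"
      using ne \<open>g \<in> set gs\<close> by fastforce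
    moreover have "\<forall>y\<in>set g. 0 < y"
      using assms(2) gs \<open>g \<in> set gs\<close> unfolding composition_def by auto
    ultimately show ?thesis
      using member_le_sum_list[of x g] by fastforce
  qed
  then show ?thesis
    unfolding composition_def t by auto
qed

lemma coarsenings_snoc:
  assumes "s \<noteq> []"
  shows "{t. coarsening t (s @ [a])}
       = (\<lambda>t. t @ [a]) ` {t. coarsening t s} \<union> add_to_last a ` {t. coarsening t s}"
  using assms coarsening_snoc_appendI coarsening_snoc_add_to_lastI
  by (auto elim: coarsening_snoc_cases)

lemma coarsenings_singleton: "{t. coarsening t [a]} = {[a]}"
  using coarsening_snoc_appendI[of "[]" "[]" a]
  by (auto simp: coarsening_Nil_iff elim: coarsening_snoc_cases[where s = "[]", simplified])

lemma finite_coarsenings: "finite {t. coarsening t s}"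
proof (induction s rule: rev_induct)
  case (snoc a s)
  then show ?case
    by (cases "s = []") (simp_all add: coarsenings_singleton coarsenings_snoc)
qed (simp add: coarsening_Nil_iff)

lemma Hsum_snoc_plus_Hsum_add_to_last:
  assumes "t \<noteq> []"
  shows "Hsum (t @ [a]) N + Hsum (add_to_last a t) N = (\<Sum>m=1..N. Hsum t m / of_nat m ^ a)"
proof -
  obtain v b where t: "t = v @ [b]"
    using assms by (cases t rule: rev_exhaust) auto
  have "Hsum t (m - 1) / of_nat m ^ a + Hsum v (m - 1) / of_nat m ^ (b + a)
      = Hsum t m / of_nat m ^ a"
    if "m \<in> {1..N}" for m
  proof -
    obtain j where m: "m = Suc j"
      using \<open>m \<in> {1..N}\<close> by (cases m) auto
    have "Hsum t m = Hsum t j + Hsum v j / of_nat m ^ b"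
      unfolding t m by (simp add: Hsum_snoc)
    then show ?thesis
      by (simp add: m add_divide_distrib divide_divide_eq_left power_add)
  qed
  moreover have "add_to_last a t = v @ [b + a]"
    by (simp add: add_to_last_def t)
  ultimately show ?thesis
    by (simp only: Hsum_snoc[of t] Hsum_snoc[of v] sum.distrib[symmetric]) (intro sum.cong; simp)
qed

lemma sum_coarsenings_snoc:
  assumes "composition s" "s \<noteq> []"
  shows "(\<Sum>t\<in>{t. coarsening t (s @ [a])}. F t)
       = (\<Sum>t\<in>{t. coarsening t s}. F (t @ [a]) + F (add_to_last a t))"
proof -
  let ?C = "{t. coarsening t s}"
  have "0 < last t" if "t \<in> ?C" for t
    using that coarsening_ne_Nil[of t s] coarsening_composition[of t s] assms
    by (auto simp: composition_def)
  then have "(\<lambda>t. t @ [a]) ` ?C \<inter> add_to_last a ` ?C = {}"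
    by (force simp: add_to_last_def)
  moreover have "inj_on (add_to_last a) ?C"
    by (rule inj_onI) (metis coarsening_ne_Nil assms(2) mem_Collect_eq add_to_last_def
        append_butlast_last_id butlast_snoc last_snoc add_right_cancel)
  ultimately show ?thesis
    unfolding coarsenings_snoc[OF assms(2)]
    by (simp add: sum.union_disjoint finite_coarsenings sum.reindex inj_on_def sum.distrib)
qed

lemma sum_Hsum_coarsenings:
  "composition s \<Longrightarrow> (\<Sum>t\<in>{t. coarsening t s}. Hsum t N) = Ssum s N"
proof (induction s arbitrary: N rule: rev_induct)
  case Nil
  then show ?case by (simp add: coarsening_Nil_iff)
next
  case (snoc a s)
  show ?case
  proof (cases "s = []")
    case True
    then show ?thesis
      using Hsum_snoc[of "[]" a N] Ssum_snoc[of "[]" a N] by (simp add: coarsenings_singleton)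
  next
    case False
    let ?C = "{t. coarsening t s}"
    have "(\<Sum>t\<in>{t. coarsening t (s @ [a])}. Hsum t N)
        = (\<Sum>t\<in>?C. Hsum (t @ [a]) N + Hsum (add_to_last a t) N)"
      using snoc.prems False by (intro sum_coarsenings_snoc) simp_all
    also have "\<dots> = (\<Sum>t\<in>?C. \<Sum>m=1..N. Hsum t m / of_nat m ^ a)"
      using False coarsening_ne_Nil by (intro sum.cong refl Hsum_snoc_plus_Hsum_add_to_last) auto
    also have "\<dots> = (\<Sum>m=1..N. (\<Sum>t\<in>?C. Hsum t m) / of_nat m ^ a)"
      unfolding sum_divide_distrib by (rule sum.swap)
    also have "\<dots> = Ssum (s @ [a]) N"
      using snoc by (simp add: Ssum_snoc)
    finally show ?thesis .
  qed
qed

lemma sum_Hsum_coarsenings_snoc_one: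
  "composition s \<Longrightarrow>
     (\<Sum>t\<in>{t. coarsening t s}. Hsum (t @ [1]) N) = (\<Sum>m=1..N. Ssum s (m - 1) / of_nat m)"
proof -
  assume "composition s"
  have "(\<Sum>t\<in>{t. coarsening t s}. Hsum (t @ [1]) N)
      = (\<Sum>t\<in>{t. coarsening t s}. \<Sum>m=1..N. Hsum t (m - 1) / of_nat m)"
    by (simp add: Hsum_snoc)
  also have "\<dots> = (\<Sum>m=1..N. (\<Sum>t\<in>{t. coarsening t s}. Hsum t (m - 1)) / of_nat m)"
    unfolding sum_divide_distrib by (rule sum.swap)
  finally show ?thesis
    using sum_Hsum_coarsenings[OF \<open>composition s\<close>] by simp
qed

lemma sum_mult_partial_sums:
  fixes f g :: "nat \<Rightarrow> 'a::comm_semiring_1"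
  shows "(\<Sum>m=1..N. (\<Sum>j=1..m. g j) * f m) + (\<Sum>m=1..N. (\<Sum>j=1..m-1. f j) * g m)
       = (\<Sum>m=1..N. g m) * (\<Sum>m=1..N. f m)"
  by (induction N) (simp_all add: algebra_simps)

lemma sum_harmonic_mult_Ssum_summand:
  assumes "composition s" "s \<noteq> []"
  shows "(\<Sum>m=1..N. harmonic m * Ssum_summand s m)
       = harmonic N * Ssum s N - (\<Sum>t\<in>{t. coarsening t s}. Hsum (t @ [1]) N)"
proof -
  let ?f = "Ssum_summand s"
  have "(\<Sum>t\<in>{t. coarsening t s}. Hsum (t @ [1]) N)
      = (\<Sum>m=1..N. (\<Sum>j=1..m-1. ?f j) * (1 / of_nat m))"
    unfolding sum_Hsum_coarsenings_snoc_one[OF assms(1)] Ssum_eq_sum_summand[OF assms(2)] by simp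
  then show ?thesis
    using sum_mult_partial_sums[of "\<lambda>j. 1 / of_nat j" ?f N]
    unfolding harmonic_def Ssum_eq_sum_summand[OF assms(2)] by (simp add: algebra_simps)
qed

lemma neg_Ssum_dual_pred_prime_expansion:
  assumes "composition s" "s \<noteq> []" "prime p"
  shows "\<exists>Z\<in>p_integral p. - Ssum (dual s) (p - 1)
           = Ssum s (p - 1) - of_nat p * (\<Sum>m=1..p-1. harmonic m * Ssum_summand s m)
             + of_nat p^2 * Z"
proof -
  obtain E where E: "\<And>k. k < p \<Longrightarrow> E k \<in> p_integral p \<and>
      (-1)^k * of_nat ((p - 1) choose k) = 1 - of_nat p * harmonic k + of_nat p^2 * E k"
    using binomial_pred_prime_expansion[OF assms(3)] by metis
  let ?f = "Ssum_summand s"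
  have "- Ssum (dual s) (p - 1) = (\<Sum>k=1..p-1. (-1)^k * of_nat ((p - 1) choose k) * ?f k)"
    by (simp add: Ssum_dual_eq_binomial_transform[OF assms(1,2)] binomial_transform_def
        sum.atLeast1_atMost_eq sum_negf[symmetric])
  also have "\<dots> = (\<Sum>k=1..p-1. (1 - of_nat p * harmonic k + of_nat p^2 * E k) * ?f k)"
    using E by (intro sum.cong refl) auto
  also have "\<dots> = Ssum s (p - 1) - of_nat p * (\<Sum>m=1..p-1. harmonic m * ?f m)
      + of_nat p^2 * (\<Sum>k=1..p-1. E k * ?f k)"
    by (simp add: Ssum_eq_sum_summand[OF assms(2)] algebra_simps sum.distrib sum_subtractf
        sum_distrib_left)
  finally have "- Ssum (dual s) (p - 1) = Ssum s (p - 1)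
      - of_nat p * (\<Sum>m=1..p-1. harmonic m * ?f m) + of_nat p^2 * (\<Sum>k=1..p-1. E k * ?f k)" .
  moreover have "(\<Sum>k=1..p-1. E k * ?f k) \<in> p_integral p"
    using E assms(3) prime_gt_0_nat[OF assms(3)]
    by (intro p_integral_sum p_integral_mult Ssum_summand_p_integral) auto
  ultimately show ?thesis
    by blast
qed

lemma rat_cong_prime_powerI:
  assumes "z \<in> p_integral p" "x - y = of_nat p ^ k * z"
  shows "rat_cong x y (int p ^ k)"
proof -
  obtain a b :: int where "b \<noteq> 0" "coprime b (int p)" "z = of_int a / of_int b"
    using assms(1) unfolding p_integral_def by blast
  then show ?thesis
    unfolding rat_cong_def using assms(2)
    by (intro exI[of _ a] exI[of _ b]) simp
qed

theorem theorem2p11: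
  fixes s :: "nat list" and p :: nat
  assumes "composition s" and "s \<noteq> []"
    and "prime p" and "odd p"
  shows "rat_cong (- Ssum (dual s) (p - 1))
           (Ssum s (p - 1) + of_nat p * (\<Sum>t\<in>{t. coarsening t s}. Hsum (t @ [1]) (p - 1)))
           (int p ^ 2)"
proof -
  obtain Z where Z: "Z \<in> p_integral p"
    and dual: "- Ssum (dual s) (p - 1) = Ssum s (p - 1)
       - of_nat p * (\<Sum>m=1..p-1. harmonic m * Ssum_summand s m) + of_nat p^2 * Z"
    using neg_Ssum_dual_pred_prime_expansion[OF assms(1-3)] by blast
  obtain Q where Q: "Q \<in> p_integral p" and harmonic: "harmonic (p - 1) = of_nat p * Q"
    using harmonic_pred_prime[OF assms(3,4)] by blast
  have "- Ssum (dual s) (p - 1)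
      - (Ssum s (p - 1) + of_nat p * (\<Sum>t\<in>{t. coarsening t s}. Hsum (t @ [1]) (p - 1)))
      = of_nat p ^ 2 * (Z - Q * Ssum s (p - 1))"
    unfolding dual sum_harmonic_mult_Ssum_summand[OF assms(1,2)] harmonic
    by (simp add: algebra_simps power2_eq_square)
  moreover have "Z - Q * Ssum s (p - 1) \<in> p_integral p"
    using Z Q Ssum_p_integral[OF assms(3)] prime_gt_0_nat[OF assms(3)]
    by (intro p_integral_diff p_integral_mult) auto
  ultimately show ?thesis
    by (intro rat_cong_prime_powerI)
qed

end
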